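(* Let $\mathbf{S}\in\mathbb{R}^{N\times N}$ be a spatial graph shift operator and $\mathbf{S}_T\in\mathbb{R}^{T\times T}$ a temporal graph shift operator. For a matrix $\mathbf{X}\in\mathbb{R}^{N\times T}$ let $\mathbf{x}_\diamond=\mathrm{vec}(\mathbf{X})\in\mathbb{R}^{NT}$. Let $\Phi(\,\cdot\,;\mathcal{H}(\mathbf{S}_T,\mathbf{S}))$ be a graph-time convolutional neural network (defined in the context) built with filters $\mathbf{H}^{fg}_\ell(\mathbf{S},\mathbf{S}_T)=\sum_{k=0}^{\bar K}\sum_{l=0}^{\tilde K}h^{fg}_{kl\ell}(\mathbf{S}_T^{\,l}\otimes\mathbf{S}^k)$ and a pointwise nonlinearity $\sigma$. Then for every permutation matrix $\mathbf{P}$ in $$\mathcal{P}=\{\mathbf{P}\in\{0,1\}^{N\times N}:\ \mathbf{P}\mathbf{1}=\mathbf{1},\ \mathbf{P}^\top\mathbf{1}=\mathbf{1}\}$$ it holds that $$\mathbf{P}^\top\,\mathrm{vec}^{-1}\!\big(\Phi(\mathrm{vec}(\mathbf{X});\mathcal{H}(\mathbf{S}_T,\mathbf{S}))\big)=\mathrm{vec}^{-1}\!\big(\Phi(\mathrm{vec}(\mathbf{P}^\top\mathbf{X});\mathcal{H}(\mathbf{S}_T,\mathbf{P}^\top\mathbf{S}\mathbf{P}))\big).$$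
   Context: $\mathrm{vec}$ stacks the columns of an $N\times T$ matrix into a vector of length $NT$ (entry $(i,t)$ goes to position $N(t-1)+i$), and $\mathrm{vec}^{-1}$ is its inverse. $\otimes$ is the Kronecker product. Graph-time convolutional neural network (GTCNN): fix $L\ge1$ layers and feature counts $F_0=1$, $F_1=\dots=F_{L-1}=F$, $F_L=1$. Set $\mathbf{x}^1_{\diamond,0}=\mathbf{x}_\diamond$. For $\ell=1,\dots,L$ and $f=1,\dots,F_\ell$, $$\mathbf{x}^f_{\diamond,\ell}=\sigma\Big(\sum_{g=1}^{F_{\ell-1}}\mathbf{H}^{fg}_\ell(\mathbf{S},\mathbf{S}_T)\,\mathbf{x}^g_{\diamond,\ell-1}\Big),$$ where $\sigma:\mathbb{R}\to\mathbb{R}$ is applied entrywise and $\mathbf{H}^{fg}_\ell(\mathbf{S},\mathbf{S}_T)=\sum_{k=0}^{\bar K}\sum_{l=0}^{\tilde K}h^{fg}_{kl\ell}(\mathbf{S}_T^{\,l}\otimes\mathbf{S}^k)$ with fixed scalar coefficients. The filter tensor is $\mathcal{H}(\mathbf{S}_T,\mathbf{S})=\{\mathbf{H}^{fg}_\ell(\mathbf{S},\mathbf{S}_T)\}_{\ell fg}$ and the GTCNN output is $\Phi(\mathbf{x}_\diamond;\mathcal{H}(\mathbf{S}_T,\mathbf{S}))=\mathbf{x}^1_{\diamond,L}\in\mathbb{R}^{NT}$. $\mathcal{H}(\mathbf{S}_T,\mathbf{P}^\top\mathbf{S}\mathbf{P})$ denotes the same filter tensor (same coefficients) with $\mathbf{S}$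 replaced by $\mathbf{P}^\top\mathbf{S}\mathbf{P}$. *)

theory Defs
  imports "Jordan_Normal_Form.Matrix"
begin

text \<open>Indices are 0-based: entry (i,t) of an N x T matrix goes to position N*t + i.\<close>

definition vec_op :: "real mat \<Rightarrow> real vec" where
  "vec_op X = vec (dim_row X * dim_col X) (\<lambda>p. X $$ (p mod dim_row X, p div dim_row X))"

definition vec_inv :: "nat \<Rightarrow> nat \<Rightarrow> real vec \<Rightarrow> real mat" where
  "vec_inv N T x = mat N T (\<lambda>(i, t). x $ (N * t + i))"

definition kron :: "real mat \<Rightarrow> real mat \<Rightarrow> real mat" where
  "kron A B = mat (dim_row A * dim_row B) (dim_col A * dim_col B)
     (\<lambda>(p, q). A $$ (p div dim_row B, q div dim_col B) * B $$ (p mod dim_row B, q mod dim_col B))"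

definition ones_vec :: "nat \<Rightarrow> real vec" where
  "ones_vec n = vec n (\<lambda>_. 1)"

definition perm_mats :: "nat \<Rightarrow> real mat set" where
  "perm_mats N = {P. P \<in> carrier_mat N N \<and> (\<forall>i<N. \<forall>j<N. P $$ (i, j) \<in> {0, 1})
     \<and> P *\<^sub>v ones_vec N = ones_vec N \<and> transpose_mat P *\<^sub>v ones_vec N = ones_vec N}"

definition gt_filter :: "nat \<Rightarrow> nat \<Rightarrow> (nat \<Rightarrow> nat \<Rightarrow> real) \<Rightarrow> real mat \<Rightarrow> real mat \<Rightarrow> real vec \<Rightarrow> real vec" where
  "gt_filter Kb Kt c S ST x = vec (dim_row ST * dim_row S)
     (\<lambda>p. \<Sum>k\<le>Kb. \<Sum>l\<le>Kt. c k l * ((kron (ST ^\<^sub>m l) (S ^\<^sub>m k)) *\<^sub>v x) $ p)"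

definition feat :: "nat \<Rightarrow> nat \<Rightarrow> nat \<Rightarrow> nat" where
  "feat L F l = (if l = 0 \<or> l = L then 1 else F)"

text \<open>Layer outputs: gtcnn_layer ... l f = x^{f+1}_{\<diamond>,l} (features 0-based).
  Coefficients h l f g k k' correspond to h^{(f+1)(g+1)}_{k k' l}.\<close>
fun gtcnn_layer :: "nat \<Rightarrow> nat \<Rightarrow> nat \<Rightarrow> nat \<Rightarrow> (nat \<Rightarrow> nat \<Rightarrow> nat \<Rightarrow> nat \<Rightarrow> nat \<Rightarrow> real)
    \<Rightarrow> (real \<Rightarrow> real) \<Rightarrow> real mat \<Rightarrow> real mat \<Rightarrow> real vec \<Rightarrow> nat \<Rightarrow> nat \<Rightarrow> real vec" where
  "gtcnn_layer L F Kb Kt h \<sigma> S ST x 0 = (\<lambda>f. x)"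
| "gtcnn_layer L F Kb Kt h \<sigma> S ST x (Suc l) = (\<lambda>f.
     map_vec \<sigma> (vec (dim_row ST * dim_row S) (\<lambda>p. \<Sum>g<feat L F l.
        gt_filter Kb Kt (h (Suc l) f g) S ST (gtcnn_layer L F Kb Kt h \<sigma> S ST x l g) $ p)))"

definition gtcnn :: "nat \<Rightarrow> nat \<Rightarrow> nat \<Rightarrow> nat \<Rightarrow> (nat \<Rightarrow> nat \<Rightarrow> nat \<Rightarrow> nat \<Rightarrow> nat \<Rightarrow> real)
    \<Rightarrow> (real \<Rightarrow> real) \<Rightarrow> real mat \<Rightarrow> real mat \<Rightarrow> real vec \<Rightarrow> real vec" where
  "gtcnn L F Kb Kt h \<sigma> S ST x = gtcnn_layer L F Kb Kt h \<sigma> S ST x L 0"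

end

theory Submission
  imports Defs
begin

text \<open>A matrix in \<open>perm_mats N\<close> is the permutation matrix of a bijection \<open>\<pi>\<close> of \<open>{..<N}\<close>, so
  \<open>P\<^sup>T S P\<close> is \<open>S\<close> with its nodes relabelled by \<open>\<pi>\<close>, and on vectorised signals
  \<open>P\<^sup>T X\<close> becomes the relabelling of \<open>vec X\<close> by the index permutation \<open>I\<^sub>T \<otimes> \<pi>\<close>, which acts
  inside each time block. Relabelling by a bijection commutes with matrix products and powers,
  with the Kronecker factors \<open>S\<^sub>T\<^sup>l \<otimes> S\<^sup>k\<close>, with matrix-vector products and with every entrywise
  operation (sums over features, the nonlinearity), so by induction on the layers each feature
  of the relabelled network is the relabelling of the original one.\<close>

definition permute_vec :: "(nat \<Rightarrow> nat) \<Rightarrow> 'a vec \<Rightarrow> 'a vec" where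
  "permute_vec \<rho> x = vec (dim_vec x) (\<lambda>p. x $ \<rho> p)"

definition permute_mat :: "(nat \<Rightarrow> nat) \<Rightarrow> 'a mat \<Rightarrow> 'a mat" where
  "permute_mat \<pi> M = mat (dim_row M) (dim_col M) (\<lambda>(i, j). M $$ (\<pi> i, \<pi> j))"

definition perm_mat :: "nat \<Rightarrow> (nat \<Rightarrow> nat) \<Rightarrow> 'a :: zero_neq_one mat" where
  "perm_mat n \<pi> = mat n n (\<lambda>(i, j). if i = \<pi> j then 1 else 0)"

lemma dim_permute_vec [simp]: "dim_vec (permute_vec \<rho> x) = dim_vec x"
  and index_permute_vec [simp]: "p < dim_vec x \<Longrightarrow> permute_vec \<rho> x $ p = x $ \<rho> p"
  by (simp_all add: permute_vec_def)

lemma permute_mat_carrier [simp]: "permute_mat \<pi> M \<in> carrier_mat (dim_row M) (dim_col M)"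
  and dim_row_permute_mat [simp]: "dim_row (permute_mat \<pi> M) = dim_row M"
  and dim_col_permute_mat [simp]: "dim_col (permute_mat \<pi> M) = dim_col M"
  and index_permute_mat [simp]:
    "i < dim_row M \<Longrightarrow> j < dim_col M \<Longrightarrow> permute_mat \<pi> M $$ (i, j) = M $$ (\<pi> i, \<pi> j)"
  by (simp_all add: permute_mat_def)

lemma map_vec_permute_vec:
  assumes "\<And>p. p < dim_vec x \<Longrightarrow> \<rho> p < dim_vec x"
  shows "map_vec f (permute_vec \<rho> x) = permute_vec \<rho> (map_vec f x)"
  by (rule eq_vecI) (simp_all add: assms)

lemma permute_mat_mult_permute_vec:
  fixes M :: "'a :: comm_semiring_0 mat"
  assumes \<rho>: "bij_betw \<rho> {..<n} {..<n}" and M: "M \<in> carrier_mat n n" and x: "dim_vec x = n"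
  shows "permute_mat \<rho> M *\<^sub>v permute_vec \<rho> x = permute_vec \<rho> (M *\<^sub>v x)"
proof (rule eq_vecI)
  fix p assume "p < dim_vec (permute_vec \<rho> (M *\<^sub>v x))"
  with M have p: "p < n" by simp
  with \<rho> have \<rho>p: "\<rho> p < n" by (auto simp: bij_betw_def)
  have "(permute_mat \<rho> M *\<^sub>v permute_vec \<rho> x) $ p = (\<Sum>q<n. M $$ (\<rho> p, \<rho> q) * x $ \<rho> q)"
    using M p x by (auto simp: scalar_prod_def lessThan_atLeast0 intro!: sum.cong)
  also have "\<dots> = (\<Sum>q<n. M $$ (\<rho> p, q) * x $ q)"
    using sum.reindex_bij_betw[OF \<rho>, of "\<lambda>q. M $$ (\<rho> p, q) * x $ q"] by simp
  also have "\<dots> = permute_vec \<rho> (M *\<^sub>v x) $ p"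
    using M p \<rho>p x by (auto simp: scalar_prod_def lessThan_atLeast0)
  finally show "(permute_mat \<rho> M *\<^sub>v permute_vec \<rho> x) $ p = permute_vec \<rho> (M *\<^sub>v x) $ p" .
qed (use M in simp)

lemma permute_mat_mult:
  fixes A B :: "'a :: comm_semiring_0 mat"
  assumes \<pi>: "bij_betw \<pi> {..<n} {..<n}" and A: "A \<in> carrier_mat n n" and B: "B \<in> carrier_mat n n"
  shows "permute_mat \<pi> (A * B) = permute_mat \<pi> A * permute_mat \<pi> B"
proof (rule eq_matI)
  fix i j assume "i < dim_row (permute_mat \<pi> A * permute_mat \<pi> B)" "j < dim_col (permute_mat \<pi> A * permute_mat \<pi> B)"
  with A B have i: "i < n" and j: "j < n" by auto
  with \<pi> have \<pi>ij: "\<pi> i < n" "\<pi> j < n" by (auto simp: bij_betw_def)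
  have "(permute_mat \<pi> A * permute_mat \<pi> B) $$ (i, j) = (\<Sum>q<n. A $$ (\<pi> i, \<pi> q) * B $$ (\<pi> q, \<pi> j))"
    using A B i j by (auto simp: scalar_prod_def lessThan_atLeast0 intro!: sum.cong)
  also have "\<dots> = (\<Sum>q<n. A $$ (\<pi> i, q) * B $$ (q, \<pi> j))"
    using sum.reindex_bij_betw[OF \<pi>, of "\<lambda>q. A $$ (\<pi> i, q) * B $$ (q, \<pi> j)"] by simp
  also have "\<dots> = permute_mat \<pi> (A * B) $$ (i, j)"
    using A B i j \<pi>ij by (auto simp: scalar_prod_def lessThan_atLeast0)
  finally show "permute_mat \<pi> (A * B) $$ (i, j) = (permute_mat \<pi> A * permute_mat \<pi> B) $$ (i, j)" by simp
qed (use A B in auto)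

lemma permute_mat_one:
  assumes \<pi>: "bij_betw \<pi> {..<n} {..<n}"
  shows "permute_mat \<pi> (1\<^sub>m n) = 1\<^sub>m n"
proof (rule eq_matI)
  fix i j assume "i < dim_row (1\<^sub>m n :: 'a mat)" "j < dim_col (1\<^sub>m n :: 'a mat)"
  hence i: "i < n" and j: "j < n" by auto
  with \<pi> have "\<pi> i < n" "\<pi> j < n" "\<pi> i = \<pi> j \<longleftrightarrow> i = j" by (auto simp: bij_betw_def inj_on_def)
  with i j show "permute_mat \<pi> (1\<^sub>m n) $$ (i, j) = (1\<^sub>m n :: 'a mat) $$ (i, j)" by simp
qed auto

lemma permute_mat_pow:
  fixes A :: "'a :: comm_semiring_1 mat"
  assumes \<pi>: "bij_betw \<pi> {..<n} {..<n}" and A: "A \<in> carrier_mat n n"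
  shows "permute_mat \<pi> (A ^\<^sub>m k) = permute_mat \<pi> A ^\<^sub>m k"
proof (induction k)
  case 0
  show ?case using permute_mat_one[OF \<pi>] A by simp
next
  case (Suc k)
  then show ?case using permute_mat_mult[OF \<pi>, of "A ^\<^sub>m k" A] A by simp
qed

lemma ex1_eq_1_if_zero_one_sum_eq_1:
  fixes f :: "nat \<Rightarrow> real"
  assumes "\<forall>j<n. f j \<in> {0, 1}" and "(\<Sum>j<n. f j) = 1"
  shows "\<exists>!j. j < n \<and> f j = 1"
proof -
  have "(\<Sum>j<n. f j) = (\<Sum>j<n. if f j = 1 then 1 else 0)"
    using assms(1) by (intro sum.cong) auto
  also have "\<dots> = real (card {j. j < n \<and> f j = 1})"
    by (simp add: sum.If_cases lessThan_def Collect_conj_eq Int_commute)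
  finally have "card {j. j < n \<and> f j = 1} = 1" using assms(2) by simp
  then obtain j where "{j. j < n \<and> f j = 1} = {j}" by (auto simp: card_1_singleton_iff)
  then show ?thesis by (auto simp: set_eq_iff)
qed

lemma perm_mats_eq_perm_mat:
  assumes P: "P \<in> perm_mats n"
  obtains \<pi> where "bij_betw \<pi> {..<n} {..<n}" and "P = perm_mat n \<pi>"
proof -
  have P_carrier: "P \<in> carrier_mat n n" and P01: "\<forall>i<n. \<forall>j<n. P $$ (i, j) \<in> {0, 1}"
    and row_sums: "P *\<^sub>v ones_vec n = ones_vec n" and col_sums: "transpose_mat P *\<^sub>v ones_vec n = ones_vec n"
    using P by (auto simp: perm_mats_def)
  have col: "\<exists>!j. j < n \<and> P $$ (j, i) = 1" if i: "i < n" for i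
  proof (rule ex1_eq_1_if_zero_one_sum_eq_1)
    have "(transpose_mat P *\<^sub>v ones_vec n) $ i = 1" using col_sums i by (simp add: ones_vec_def)
    then show "(\<Sum>j<n. P $$ (j, i)) = 1"
      using i P_carrier by (auto simp: scalar_prod_def ones_vec_def lessThan_atLeast0)
  qed (use P01 i in auto)
  have row: "\<exists>!i. i < n \<and> P $$ (j, i) = 1" if j: "j < n" for j
  proof (rule ex1_eq_1_if_zero_one_sum_eq_1)
    have "(P *\<^sub>v ones_vec n) $ j = 1" using row_sums j by (simp add: ones_vec_def)
    then show "(\<Sum>i<n. P $$ (j, i)) = 1"
      using j P_carrier by (auto simp: scalar_prod_def ones_vec_def lessThan_atLeast0)
  qed (use P01 j in auto)
  define \<pi> where "\<pi> i = (THE j. j < n \<and> P $$ (j, i) = 1)" for i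
  have \<pi>: "\<pi> i < n" "P $$ (\<pi> i, i) = 1" if "i < n" for i
    using theI'[OF col[OF that]] by (simp_all add: \<pi>_def)
  have P_entry: "P $$ (j, i) = (if j = \<pi> i then 1 else 0)" if i: "i < n" and j: "j < n" for i j
  proof (cases "j = \<pi> i")
    case False
    then have "P $$ (j, i) \<noteq> 1" using col[OF i] \<pi>[OF i] j by blast
    with False show ?thesis using P01 i j by auto
  qed (use \<pi>[OF i] in simp)
  have "inj_on \<pi> {..<n}"
  proof (rule inj_onI)
    fix a b assume "a \<in> {..<n}" "b \<in> {..<n}" "\<pi> a = \<pi> b"
    then show "a = b" using row[of "\<pi> a"] \<pi>[of a] \<pi>[of b] by (metis lessThan_iff)
  qed
  moreover have "\<pi> ` {..<n} = {..<n}"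
    using endo_inj_surj[of "{..<n}" \<pi>] calculation \<pi>(1) by auto
  ultimately have "bij_betw \<pi> {..<n} {..<n}" by (simp add: bij_betw_def)
  moreover have "P = perm_mat n \<pi>"
    using P_carrier P_entry by (auto simp: perm_mat_def)
  ultimately show ?thesis by (rule that)
qed

lemma transpose_perm_mat_mult:
  fixes M :: "'a :: comm_semiring_1 mat"
  assumes \<pi>: "\<And>i. i < n \<Longrightarrow> \<pi> i < n" and M: "M \<in> carrier_mat n m"
  shows "transpose_mat (perm_mat n \<pi>) * M = mat n m (\<lambda>(i, j). M $$ (\<pi> i, j))"
proof (rule eq_matI)
  fix i j assume "i < dim_row (mat n m (\<lambda>(i, j). M $$ (\<pi> i, j)))" "j < dim_col (mat n m (\<lambda>(i, j). M $$ (\<pi> i, j)))"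
  then have i: "i < n" and j: "j < m" by auto
  have "(transpose_mat (perm_mat n \<pi>) * M) $$ (i, j) = (\<Sum>a<n. (if a = \<pi> i then 1 else 0) * M $$ (a, j))"
    using M i j by (auto simp: perm_mat_def scalar_prod_def lessThan_atLeast0 intro!: sum.cong)
  also have "\<dots> = M $$ (\<pi> i, j)"
    using \<pi>[OF i] by (simp add: if_distrib[of "\<lambda>c. c * _"] sum.delta cong: if_cong)
  finally show "(transpose_mat (perm_mat n \<pi>) * M) $$ (i, j) = mat n m (\<lambda>(i, j). M $$ (\<pi> i, j)) $$ (i, j)"
    using i j by simp
qed (use M in \<open>auto simp: perm_mat_def\<close>)

lemma mult_perm_mat:
  fixes M :: "'a :: comm_semiring_1 mat"
  assumes \<pi>: "\<And>j. j < n \<Longrightarrow> \<pi> j < n" and M: "M \<in> carrier_mat m n"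
  shows "M * perm_mat n \<pi> = mat m n (\<lambda>(i, j). M $$ (i, \<pi> j))"
proof (rule eq_matI)
  fix i j assume "i < dim_row (mat m n (\<lambda>(i, j). M $$ (i, \<pi> j)))" "j < dim_col (mat m n (\<lambda>(i, j). M $$ (i, \<pi> j)))"
  then have i: "i < m" and j: "j < n" by auto
  have "(M * perm_mat n \<pi>) $$ (i, j) = (\<Sum>a<n. M $$ (i, a) * (if a = \<pi> j then 1 else 0))"
    using M i j by (auto simp: perm_mat_def scalar_prod_def lessThan_atLeast0 intro!: sum.cong)
  also have "\<dots> = M $$ (i, \<pi> j)"
    using \<pi>[OF j] by (simp add: if_distrib[of "\<lambda>c. _ * c"] sum.delta cong: if_cong)
  finally show "(M * perm_mat n \<pi>) $$ (i, j) = mat m n (\<lambda>(i, j). M $$ (i, \<pi> j)) $$ (i, j)"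
    using i j by simp
qed (use M in \<open>auto simp: perm_mat_def\<close>)

lemma transpose_perm_mat_mult_mult_perm_mat:
  fixes S :: "'a :: comm_semiring_1 mat"
  assumes \<pi>: "\<And>i. i < n \<Longrightarrow> \<pi> i < n" and S: "S \<in> carrier_mat n n"
  shows "transpose_mat (perm_mat n \<pi>) * S * perm_mat n \<pi> = permute_mat \<pi> S"
proof -
  have "transpose_mat (perm_mat n \<pi>) * S * perm_mat n \<pi> = mat n n (\<lambda>(i, j). S $$ (\<pi> i, j)) * perm_mat n \<pi>"
    using transpose_perm_mat_mult[OF \<pi> S] by simp
  also have "\<dots> = mat n n (\<lambda>(i, j). S $$ (\<pi> i, \<pi> j))"
    using \<pi> by (subst mult_perm_mat) auto
  also have "\<dots> = permute_mat \<pi> S"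
    using S by (simp add: permute_mat_def)
  finally show ?thesis .
qed

text \<open>The index permutation \<open>I \<otimes> \<pi>\<close>: position \<open>n * t + i\<close> of a vectorised matrix goes to \<open>n * t + \<pi> i\<close>.\<close>
definition block_perm :: "nat \<Rightarrow> (nat \<Rightarrow> nat) \<Rightarrow> nat \<Rightarrow> nat" where
  "block_perm n \<pi> p = n * (p div n) + \<pi> (p mod n)"

lemma
  assumes "\<pi> (p mod n) < n"
  shows block_perm_div: "block_perm n \<pi> p div n = p div n"
    and block_perm_mod: "block_perm n \<pi> p mod n = \<pi> (p mod n)"
  using assms by (simp_all add: block_perm_def)

lemma block_perm_less:
  assumes "\<pi> (p mod n) < n" and "p < n * m"
  shows "block_perm n \<pi> p < n * m"
proof -
  have "p div n < m" using assms(2) by (simp add: less_mult_imp_div_less mult.commute)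
  then have "n * Suc (p div n) \<le> n * m" by (intro mult_le_mono2) simp
  then have "n * (p div n) + n \<le> n * m" by simp
  with assms(1) show ?thesis by (simp add: block_perm_def)
qed

lemma bij_betw_block_perm:
  assumes \<pi>: "bij_betw \<pi> {..<n} {..<n}"
  shows "bij_betw (block_perm n \<pi>) {..<n * m} {..<n * m}"
proof -
  have \<pi>_less: "\<pi> (p mod n) < n" if "p < n * m" for p
    using \<pi> that by (cases "n = 0") (auto simp: bij_betw_def)
  have inj: "inj_on (block_perm n \<pi>) {..<n * m}"
  proof (rule inj_onI)
    fix a b assume a: "a \<in> {..<n * m}" and b: "b \<in> {..<n * m}"
      and eq: "block_perm n \<pi> a = block_perm n \<pi> b"
    have n: "0 < n" using a by (cases n) auto
    have "\<pi> (a mod n) < n" "\<pi> (b mod n) < n" using a b \<pi>_less by simp_all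
    then have div_eq: "a div n = b div n" and "\<pi> (a mod n) = \<pi> (b mod n)"
      using eq block_perm_div[of \<pi> a n] block_perm_div[of \<pi> b n]
        block_perm_mod[of \<pi> a n] block_perm_mod[of \<pi> b n] by simp_all
    moreover have "a mod n \<in> {..<n}" "b mod n \<in> {..<n}" using n by simp_all
    ultimately have mod_eq: "a mod n = b mod n"
      using inj_onD[OF bij_betw_imp_inj_on[OF \<pi>]] by blast
    have "a = a div n * n + a mod n" by simp
    also have "\<dots> = b" using div_eq mod_eq by simp
    finally show "a = b" .
  qed
  moreover have "block_perm n \<pi> ` {..<n * m} \<subseteq> {..<n * m}"
    using block_perm_less \<pi>_less by blast
  ultimately show ?thesis
    using endo_inj_surj[of "{..<n * m}"] by (simp add: bij_betw_def)
qed

lemma kron_permute_mat: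
  assumes \<pi>: "\<And>i. i < n \<Longrightarrow> \<pi> i < n" and A: "A \<in> carrier_mat m m" and B: "B \<in> carrier_mat n n"
  shows "kron A (permute_mat \<pi> B) = permute_mat (block_perm n \<pi>) (kron A B)"
proof (rule eq_matI)
  fix p q assume "p < dim_row (permute_mat (block_perm n \<pi>) (kron A B))"
    "q < dim_col (permute_mat (block_perm n \<pi>) (kron A B))"
  with A B have p: "p < m * n" and q: "q < m * n" by (simp_all add: kron_def)
  then have "0 < n" by (cases n) auto
  then have \<pi>_less: "\<pi> (p mod n) < n" "\<pi> (q mod n) < n" by (simp_all add: \<pi>)
  moreover have "block_perm n \<pi> p < m * n" "block_perm n \<pi> q < m * n"
    using block_perm_less[of \<pi> _ n m] \<pi>_less p q by (simp_all add: mult.commute)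
  ultimately show "kron A (permute_mat \<pi> B) $$ (p, q) = permute_mat (block_perm n \<pi>) (kron A B) $$ (p, q)"
    using A B p q by (simp add: kron_def block_perm_div block_perm_mod)
qed (simp_all add: kron_def)

lemma gt_filter_permute:
  assumes \<pi>: "bij_betw \<pi> {..<n} {..<n}" and S: "S \<in> carrier_mat n n" and ST: "ST \<in> carrier_mat m m"
    and y: "dim_vec y = m * n"
  shows "gt_filter Kb Kt c (permute_mat \<pi> S) ST (permute_vec (block_perm n \<pi>) y)
    = permute_vec (block_perm n \<pi>) (gt_filter Kb Kt c S ST y)"
proof -
  let ?\<rho> = "block_perm n \<pi>"
  have \<rho>: "bij_betw ?\<rho> {..<m * n} {..<m * n}"
    using bij_betw_block_perm[OF \<pi>, of m] by (simp add: mult.commute)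
  have \<pi>_less: "\<And>i. i < n \<Longrightarrow> \<pi> i < n" using \<pi> by (auto simp: bij_betw_def)
  have summand: "kron (ST ^\<^sub>m l) (permute_mat \<pi> S ^\<^sub>m k) *\<^sub>v permute_vec ?\<rho> y
      = permute_vec ?\<rho> (kron (ST ^\<^sub>m l) (S ^\<^sub>m k) *\<^sub>v y)" for k l
  proof -
    have "kron (ST ^\<^sub>m l) (permute_mat \<pi> S ^\<^sub>m k) = kron (ST ^\<^sub>m l) (permute_mat \<pi> (S ^\<^sub>m k))"
      using permute_mat_pow[OF \<pi> S] by simp
    also have "\<dots> = permute_mat ?\<rho> (kron (ST ^\<^sub>m l) (S ^\<^sub>m k))"
      by (rule kron_permute_mat[where m = m]) (use \<pi>_less S ST in simp_all)
    finally have "kron (ST ^\<^sub>m l) (permute_mat \<pi> S ^\<^sub>m k) = permute_mat ?\<rho> (kron (ST ^\<^sub>m l) (S ^\<^sub>m k))" .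
    moreover have "kron (ST ^\<^sub>m l) (S ^\<^sub>m k) \<in> carrier_mat (m * n) (m * n)"
      using S ST by (simp add: kron_def)
    ultimately show ?thesis using permute_mat_mult_permute_vec[OF \<rho> _ y] by simp
  qed
  have dim_kron: "dim_row (kron (ST ^\<^sub>m l) (S ^\<^sub>m k)) = m * n" for k l
    using S ST by (simp add: kron_def)
  show ?thesis
  proof (rule eq_vecI)
    fix p assume "p < dim_vec (permute_vec ?\<rho> (gt_filter Kb Kt c S ST y))"
    then have p: "p < m * n" using S ST by (simp add: gt_filter_def)
    moreover have "?\<rho> p < m * n" using \<rho> p by (auto simp: bij_betw_def)
    ultimately show "gt_filter Kb Kt c (permute_mat \<pi> S) ST (permute_vec ?\<rho> y) $ p
        = permute_vec ?\<rho> (gt_filter Kb Kt c S ST y) $ p"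
      using S ST y by (simp add: gt_filter_def summand dim_kron)
  qed (use S ST in \<open>simp add: gt_filter_def\<close>)
qed

lemma vec_sum_permute_vec:
  assumes "\<And>g. g \<in> G \<Longrightarrow> dim_vec (v g) = n" and "\<And>p. p < n \<Longrightarrow> \<rho> p < n"
  shows "vec n (\<lambda>p. \<Sum>g\<in>G. permute_vec \<rho> (v g) $ p) = permute_vec \<rho> (vec n (\<lambda>p. \<Sum>g\<in>G. v g $ p))"
  by (rule eq_vecI) (auto simp: assms intro!: sum.cong)

lemma dim_gtcnn_layer:
  assumes "dim_vec x = dim_row ST * dim_row S"
  shows "dim_vec (gtcnn_layer L F Kb Kt h \<sigma> S ST x l f) = dim_row ST * dim_row S"
  using assms by (cases l) simp_all

lemma gtcnn_layer_permute:
  assumes \<pi>: "bij_betw \<pi> {..<n} {..<n}" and S: "S \<in> carrier_mat n n" and ST: "ST \<in> carrier_mat m m"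
    and x: "dim_vec x = m * n"
  shows "gtcnn_layer L F Kb Kt h \<sigma> (permute_mat \<pi> S) ST (permute_vec (block_perm n \<pi>) x) l f
    = permute_vec (block_perm n \<pi>) (gtcnn_layer L F Kb Kt h \<sigma> S ST x l f)"
proof (induction l arbitrary: f)
  case 0
  show ?case by simp
next
  case (Suc l)
  let ?\<rho> = "block_perm n \<pi>"
  let ?y = "gtcnn_layer L F Kb Kt h \<sigma> S ST x l"
  let ?z = "\<lambda>g. gt_filter Kb Kt (h (Suc l) f g) S ST (?y g)"
  have dim_y: "dim_vec (?y g) = m * n" for g
    using dim_gtcnn_layer[of x ST S] x S ST by simp
  have dim_z: "dim_vec (?z g) = m * n" for g
    using S ST by (simp add: gt_filter_def)
  have \<rho>_less: "?\<rho> p < m * n" if "p < m * n" for p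
    using bij_betw_block_perm[OF \<pi>, of m] that by (auto simp: bij_betw_def mult.commute)
  have "gtcnn_layer L F Kb Kt h \<sigma> (permute_mat \<pi> S) ST (permute_vec ?\<rho> x) (Suc l) f
      = map_vec \<sigma> (vec (m * n) (\<lambda>p. \<Sum>g<feat L F l. permute_vec ?\<rho> (?z g) $ p))"
    using S ST by (simp add: Suc.IH gt_filter_permute[OF \<pi> S ST dim_y])
  also have "\<dots> = map_vec \<sigma> (permute_vec ?\<rho> (vec (m * n) (\<lambda>p. \<Sum>g<feat L F l. ?z g $ p)))"
    using vec_sum_permute_vec[of _ ?z, OF dim_z \<rho>_less] by simp
  also have "\<dots> = permute_vec ?\<rho> (map_vec \<sigma> (vec (m * n) (\<lambda>p. \<Sum>g<feat L F l. ?z g $ p)))"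
    using \<rho>_less by (intro map_vec_permute_vec) simp
  also have "\<dots> = permute_vec ?\<rho> (gtcnn_layer L F Kb Kt h \<sigma> S ST x (Suc l) f)"
    using S ST by simp
  finally show ?case .
qed

lemma vec_op_transpose_perm_mat_mult:
  assumes \<pi>: "\<And>i. i < n \<Longrightarrow> \<pi> i < n" and X: "X \<in> carrier_mat n m"
  shows "vec_op (transpose_mat (perm_mat n \<pi>) * X) = permute_vec (block_perm n \<pi>) (vec_op X)"
proof (rule eq_vecI)
  fix p assume "p < dim_vec (permute_vec (block_perm n \<pi>) (vec_op X))"
  then have p: "p < n * m" using X by (simp add: vec_op_def)
  then have "0 < n" by (cases n) auto
  then have \<pi>p: "\<pi> (p mod n) < n" by (simp add: \<pi>)
  have "p div n < m" using p by (simp add: less_mult_imp_div_less mult.commute)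
  then show "vec_op (transpose_mat (perm_mat n \<pi>) * X) $ p = permute_vec (block_perm n \<pi>) (vec_op X) $ p"
    using p \<pi>p X block_perm_less[of \<pi> p n m]
    by (simp add: transpose_perm_mat_mult[OF \<pi> X] vec_op_def block_perm_div block_perm_mod)
qed (use X in \<open>simp add: transpose_perm_mat_mult[OF \<pi> X] vec_op_def\<close>)

lemma transpose_perm_mat_mult_vec_inv:
  assumes \<pi>: "\<And>i. i < n \<Longrightarrow> \<pi> i < n" and y: "dim_vec y = n * m"
  shows "transpose_mat (perm_mat n \<pi>) * vec_inv n m y = vec_inv n m (permute_vec (block_perm n \<pi>) y)"
proof -
  have "transpose_mat (perm_mat n \<pi>) * vec_inv n m y = mat n m (\<lambda>(i, t). vec_inv n m y $$ (\<pi> i, t))"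
    by (rule transpose_perm_mat_mult) (simp_all add: \<pi> vec_inv_def)
  moreover have "n * t + i < n * m" if "i < n" "t < m" for i t
  proof -
    have "n * Suc t \<le> n * m" using that by (intro mult_le_mono2) simp
    with that show ?thesis by simp
  qed
  moreover have "block_perm n \<pi> (n * t + i) = n * t + \<pi> i" if "i < n" for i t
    using that by (simp add: block_perm_def)
  ultimately show ?thesis
    using \<pi> y by (auto simp: vec_inv_def intro!: eq_matI)
qed

theorem proposition2:
  fixes N T L F Kb Kt :: nat
    and h :: "nat \<Rightarrow> nat \<Rightarrow> nat \<Rightarrow> nat \<Rightarrow> nat \<Rightarrow> real"
    and \<sigma> :: "real \<Rightarrow> real"
    and S ST X P :: "real mat"
  assumes "L \<ge> 1"
    and "S \<in> carrier_mat N N"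
    and "ST \<in> carrier_mat T T"
    and "X \<in> carrier_mat N T"
    and "P \<in> perm_mats N"
  shows "transpose_mat P * vec_inv N T (gtcnn L F Kb Kt h \<sigma> S ST (vec_op X))
       = vec_inv N T (gtcnn L F Kb Kt h \<sigma> (transpose_mat P * S * P) ST (vec_op (transpose_mat P * X)))"
proof -
  note S = assms(2) and ST = assms(3) and X = assms(4)
  obtain \<pi> where \<pi>: "bij_betw \<pi> {..<N} {..<N}" and P: "P = perm_mat N \<pi>"
    using perm_mats_eq_perm_mat[OF assms(5)] .
  have \<pi>_less: "\<And>i. i < N \<Longrightarrow> \<pi> i < N" using \<pi> by (auto simp: bij_betw_def)
  let ?\<rho> = "block_perm N \<pi>"
  let ?\<Phi> = "\<lambda>S x. gtcnn L F Kb Kt h \<sigma> S ST x"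
  have dim_x: "dim_vec (vec_op X) = T * N" using X by (simp add: vec_op_def)
  have "?\<Phi> (transpose_mat P * S * P) (vec_op (transpose_mat P * X)) = ?\<Phi> (permute_mat \<pi> S) (permute_vec ?\<rho> (vec_op X))"
    by (simp only: P transpose_perm_mat_mult_mult_perm_mat[OF \<pi>_less S] vec_op_transpose_perm_mat_mult[OF \<pi>_less X])
  also have "\<dots> = permute_vec ?\<rho> (?\<Phi> S (vec_op X))"
    unfolding gtcnn_def by (rule gtcnn_layer_permute[OF \<pi> S ST dim_x])
  finally show ?thesis
    using dim_gtcnn_layer[of "vec_op X" ST S] dim_x S ST
    by (simp add: P gtcnn_def transpose_perm_mat_mult_vec_inv[OF \<pi>_less] mult.commute)
qed

end
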